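(* Let $L>0$, $N\ge 1$, grid points $x_i$, $i=0,\dots,N$, evenly spaced on $[0,L]$, and let $\mathbf D,\mathbf H$ be $(N+1)\times(N+1)$ real matrices with $\mathbf H$ diagonal and positive definite, $\mathbf H\mathbf D=\mathbf Q$, and $\mathbf u^T(\mathbf Q+\mathbf Q^T)\mathbf v=u_Nv_N-u_0v_0$ for all $\mathbf u,\mathbf v\in\mathbb{R}^{N+1}$. Let $\bar{\mathbf c}=(\bar c_0,\dots,\bar c_N)^T$ with all $\bar c_i>0$, and $\mathbf a,\mathbf b,\mathbf c,\mathbf d\in\mathbb{R}^{N+1}$. Define $\mathbf\Lambda=\mathrm{diag}(-\bar{\mathbf c},\bar{\mathbf c})$, $\mathbf D_2=\mathbf I_2\otimes\mathbf D$, $\mathbf H_2=\mathbf I_2\otimes\mathbf H$, $$\mathbf M_{\bar c}=\begin{pmatrix}-\mathrm{diag}(\mathbf D\bar{\mathbf c})&0\\0&\mathrm{diag}(\mathbf D\bar{\mathbf c})\end{pmatrix},\quad \tilde{\mathbf B}=\begin{pmatrix}\mathrm{diag}(\mathbf a)&\mathrm{diag}(\mathbf b)\\\mathrm{diag}(\mathbf c)&\mathrm{diag}(\mathbf d)\end{pmatrix},$$ and $\mathbf\Lambda_D=\tfrac12(\mathbf\Lambda\mathbf D_2+\mathbf D_2\mathbf\Lambda)-\tfrac12\mathbf M_{\bar c}$. Let $R_0,R_L\in[-1,1]$ and set $\alpha_0=-\bar c_0$, $\alpha_L=-\bar c_N$. Let $\mathbf W(t)=(\mathbf w_1(t)^T,\mathbf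 w_2(t)^T)^T\in\mathbb{R}^{2(N+1)}$, with components $w_{k,i}$, be a solution of $$\mathbf W_t+\mathbf\Lambda_D\mathbf W=\tilde{\mathbf B}\mathbf W+\alpha_0\mathbf H_2^{-1}(w_{2,0}-R_0w_{1,0})(E_2\otimes e_0)+\alpha_L\mathbf H_2^{-1}(w_{1,N}-R_Lw_{2,N})(E_1\otimes e_N),$$ where $E_j\in\mathbb{R}^2$ and $e_j\in\mathbb{R}^{N+1}$ are standard basis vectors. Let $\mathbf E_h=\mathbf W^T\mathbf H_2\mathbf W$ and let $\|\cdot\|_{\mathbf H}$ denote the operator norm induced by the inner product $(\mathbf U,\mathbf V)_{\mathbf H}=\mathbf U^T\mathbf H_2\mathbf V$. Then $$\frac{d\mathbf E_h}{dt}\le 2\big(\|\tilde{\mathbf B}\|_{\mathbf H}+\|\mathbf M_{\bar c}\|_{\mathbf H}\big)\mathbf E_h .$$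
   Context: This is the summation-by-parts / simultaneous-approximation-term (SBP-SAT) semi-discretization of $W_t+\Lambda(x)W_x=\tilde B(x)W$, $\Lambda=\mathrm{diag}(-\bar c,\bar c)$, with boundary conditions $w_2(0,t)=R_0w_1(0,t)$, $w_1(L,t)=R_Lw_2(L,t)$ and zero boundary and source data; $\bar{\mathbf c},\mathbf a,\dots$ are the grid values of the coefficient functions. *)

theory Defs
  imports "HOL-Analysis.Analysis"
begin

text \<open>Vectors of length n are functions nat => real (only indices < n matter);
  n x n matrices are functions nat => nat => real (only indices < n matter).\<close>

definition mvec :: "nat \<Rightarrow> (nat \<Rightarrow> nat \<Rightarrow> real) \<Rightarrow> (nat \<Rightarrow> real) \<Rightarrow> nat \<Rightarrow> real" where
  "mvec n A u = (\<lambda>i. \<Sum>j<n. A i j * u j)"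

definition mmul :: "nat \<Rightarrow> (nat \<Rightarrow> nat \<Rightarrow> real) \<Rightarrow> (nat \<Rightarrow> nat \<Rightarrow> real) \<Rightarrow> nat \<Rightarrow> nat \<Rightarrow> real" where
  "mmul n A B = (\<lambda>i j. \<Sum>k<n. A i k * B k j)"

definition diagm :: "(nat \<Rightarrow> real) \<Rightarrow> nat \<Rightarrow> nat \<Rightarrow> real" where
  "diagm v = (\<lambda>i j. if i = j then v i else 0)"

text \<open>2x2 block matrix with n x n blocks; the stacked vector (w1, w2) has w1 at indices
  0..n-1 and w2 at indices n..2n-1.\<close>
definition blk :: "nat \<Rightarrow> (nat \<Rightarrow> nat \<Rightarrow> real) \<Rightarrow> (nat \<Rightarrow> nat \<Rightarrow> real) \<Rightarrow>
    (nat \<Rightarrow> nat \<Rightarrow> real) \<Rightarrow> (nat \<Rightarrow> nat \<Rightarrow> real) \<Rightarrow> nat \<Rightarrow> nat \<Rightarrow> real" where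
  "blk n A B C D = (\<lambda>i j. if i < n then (if j < n then A i j else B i (j - n))
                            else (if j < n then C (i - n) j else D (i - n) (j - n)))"

definition kron_I2 :: "nat \<Rightarrow> (nat \<Rightarrow> nat \<Rightarrow> real) \<Rightarrow> nat \<Rightarrow> nat \<Rightarrow> real" where
  "kron_I2 n A = blk n A (\<lambda>_ _. 0) (\<lambda>_ _. 0) A"

definition bform :: "nat \<Rightarrow> (nat \<Rightarrow> nat \<Rightarrow> real) \<Rightarrow> (nat \<Rightarrow> real) \<Rightarrow> (nat \<Rightarrow> real) \<Rightarrow> real" where
  "bform n G u v = (\<Sum>i<n. \<Sum>j<n. u i * G i j * v j)"

definition opnorm_G :: "nat \<Rightarrow> (nat \<Rightarrow> nat \<Rightarrow> real) \<Rightarrow> (nat \<Rightarrow> nat \<Rightarrow> real) \<Rightarrow> real" where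
  "opnorm_G n G A = Sup {sqrt (bform n G (mvec n A u) (mvec n A u)) / sqrt (bform n G u u)
                          | u. \<exists>i<n. u i \<noteq> 0}"

end

theory Submission
  imports Defs
begin

(* Differentiating E_h = W^T H_2 W along the semi-discrete flow gives dE_h/dt = 2 W^T H_2 W_t.
   Because H is diagonal it commutes with the diagonal matrix Lambda, and the SBP property
   Q + Q^T = e_N e_N^T - e_0 e_0^T turns W^T H_2 (Lambda D_2 + D_2 Lambda) W into the boundary
   terms cbar_0 (w_{1,0}^2 - w_{2,0}^2) - cbar_N (w_{1,N}^2 - w_{2,N}^2).  Together with the
   penalty terms they add up to
     - cbar_0 (w_{1,0}^2 + w_{2,0}^2 - 2 R_0 w_{1,0} w_{2,0})
     - cbar_N (w_{1,N}^2 + w_{2,N}^2 - 2 R_L w_{1,N} w_{2,N}),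
   which is nonpositive since |R_0|, |R_L| <= 1.  The remaining term W^T H_2 (2 B + M_cbar) W is
   bounded by the Cauchy-Schwarz inequality for the H_2 inner product and the definition of the
   operator norm. *)

lemma sum_lessThan_double:
  fixes f :: "nat \<Rightarrow> 'a::comm_monoid_add"
  shows "sum f {..<2*n} = (\<Sum>i<n. f i) + (\<Sum>i<n. f (n + i))"
proof -
  have "sum f {..<n + k} = (\<Sum>i<n. f i) + (\<Sum>i<k. f (n + i))" for k
    by (induction k) (simp_all add: ac_simps)
  from this[of n] show ?thesis
    by (simp add: mult_2)
qed

lemma mvec_cong: "(\<And>j. j < n \<Longrightarrow> V j = V' j) \<Longrightarrow> mvec n A V i = mvec n A V' i"
  unfolding mvec_def by (rule sum.cong) auto

lemma mvec_zero_matrix [simp]: "mvec n (\<lambda>_ _. 0) V = (\<lambda>_. 0)"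
  unfolding mvec_def by simp

lemma mvec_diagm:
  assumes "i < n"
  shows "mvec n (diagm v) V i = v i * V i"
proof -
  have "diagm v i j * V j = (if i = j then v i * V i else 0)" for j
    unfolding diagm_def by simp
  then show ?thesis
    unfolding mvec_def using assms by simp
qed

lemma mvec_mmul: "mvec n (mmul n A B) V = mvec n A (mvec n B V)"
  unfolding mvec_def mmul_def
  by (rule ext) (simp add: sum_distrib_left sum_distrib_right mult.assoc, rule sum.swap)

lemma mvec_add_matrix: "mvec n (\<lambda>p q. A p q + B p q) V = (\<lambda>i. mvec n A V i + mvec n B V i)"
  unfolding mvec_def by (simp add: sum.distrib distrib_right)

lemma mvec_diff_matrix: "mvec n (\<lambda>p q. A p q - B p q) V = (\<lambda>i. mvec n A V i - mvec n B V i)"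
  unfolding mvec_def by (simp add: sum_subtractf left_diff_distrib)

lemma mvec_divide_matrix: "mvec n (\<lambda>p q. A p q / r) V = (\<lambda>i. mvec n A V i / r)"
  unfolding mvec_def by (simp add: sum_divide_distrib)

lemma mvec_blk_upper:
  "i < n \<Longrightarrow> mvec (2*n) (blk n A B C E) V i = mvec n A V i + mvec n B (\<lambda>k. V (n + k)) i"
  unfolding mvec_def blk_def sum_lessThan_double by simp

lemma mvec_blk_lower:
  "i < n \<Longrightarrow> mvec (2*n) (blk n A B C E) V (n + i) = mvec n C V i + mvec n E (\<lambda>k. V (n + k)) i"
  unfolding mvec_def blk_def sum_lessThan_double by simp

lemma bform_cong:
  "(\<And>i. i < n \<Longrightarrow> u i = u' i) \<Longrightarrow> (\<And>i. i < n \<Longrightarrow> v i = v' i) \<Longrightarrow>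
    bform n G u v = bform n G u' v'"
  unfolding bform_def by (intro sum.cong) auto

lemma bform_add_right: "bform n G u (\<lambda>i. v i + w i) = bform n G u v + bform n G u w"
  unfolding bform_def by (simp add: sum.distrib algebra_simps)

lemma bform_diff_right: "bform n G u (\<lambda>i. v i - w i) = bform n G u v - bform n G u w"
  unfolding bform_def by (simp add: sum_subtractf algebra_simps)

lemma bform_scale_right: "bform n G u (\<lambda>i. r * v i) = r * bform n G u v"
  unfolding bform_def by (simp add: sum_distrib_left algebra_simps)

lemma bform_divide_right: "bform n G u (\<lambda>i. v i / r) = bform n G u v / r"
  unfolding bform_def by (simp add: sum_divide_distrib)

lemma bform_mmul: "bform n (mmul n A B) u v = bform n A u (mvec n B v)"
  unfolding bform_def mmul_def mvec_def
  by (simp add: sum_distrib_left sum_distrib_right mult.assoc) (rule sum.cong, simp, rule sum.swap)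

lemma bform_add_transpose: "bform n (\<lambda>i j. A i j + A j i) u v = bform n A u v + bform n A v u"
  unfolding bform_def by (subst (3) sum.swap) (simp add: sum.distrib algebra_simps)

lemma bform_kron_I2:
  "bform (2*n) (kron_I2 n G) U V = bform n G U V + bform n G (\<lambda>i. U (n + i)) (\<lambda>i. V (n + i))"
  unfolding bform_def kron_I2_def blk_def sum_lessThan_double by simp

lemma bform_has_real_derivative:
  assumes "\<And>i. i < m \<Longrightarrow> ((\<lambda>s. W s i) has_real_derivative W' i) (at t)"
  shows "((\<lambda>s. bform m G (W s) (W s))
           has_real_derivative bform m G W' (W t) + bform m G (W t) W') (at t)"
  unfolding bform_def
  by (auto intro!: derivative_eq_intros assms simp: sum.distrib algebra_simps)

definition unit_vec :: "nat \<Rightarrow> nat \<Rightarrow> real" where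
  "unit_vec k = (\<lambda>p. if p = k then 1 else 0)"

locale pos_diag_weight =
  fixes m :: nat and G :: "nat \<Rightarrow> nat \<Rightarrow> real"
  assumes off_diag: "\<And>i j. i < m \<Longrightarrow> j < m \<Longrightarrow> i \<noteq> j \<Longrightarrow> G i j = 0"
    and diag_pos: "\<And>i. i < m \<Longrightarrow> G i i > 0"
begin

lemma bform_eq_diag: "bform m G u v = (\<Sum>i<m. G i i * u i * v i)"
  unfolding bform_def
proof (rule sum.cong)
  fix i assume "i \<in> {..<m}"
  then have "(\<Sum>j<m. u i * G i j * v j) = (\<Sum>j<m. if j = i then u i * G i i * v i else 0)"
    using off_diag by (intro sum.cong) auto
  then show "(\<Sum>j<m. u i * G i j * v j) = G i i * u i * v i"
    using \<open>i \<in> {..<m}\<close> by simp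
qed simp

lemma bform_commute: "bform m G u v = bform m G v u"
  unfolding bform_eq_diag by (simp add: ac_simps)

lemma bform_scale_swap: "bform m G u (\<lambda>i. c i * v i) = bform m G (\<lambda>i. c i * u i) v"
  unfolding bform_eq_diag by (simp add: ac_simps)

lemma bform_self_nonneg: "bform m G u u \<ge> 0"
  unfolding bform_eq_diag using diag_pos by (intro sum_nonneg) (simp add: less_imp_le mult.assoc)

lemma bform_self_pos:
  assumes "i < m" "u i \<noteq> 0"
  shows "bform m G u u > 0"
proof -
  have "0 < G i i * u i * u i"
    using diag_pos[OF assms(1)] assms(2) by (auto simp: mult.assoc zero_less_mult_iff)
  also have "\<dots> \<le> (\<Sum>i<m. G i i * u i * u i)"
    using diag_pos assms(1) by (intro member_le_sum) (auto simp: mult.assoc less_imp_le)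
  finally show ?thesis
    unfolding bform_eq_diag .
qed

lemma bform_Cauchy_Schwarz: "(bform m G u v)\<^sup>2 \<le> bform m G u u * bform m G v v"
proof -
  have "(bform m G u v)\<^sup>2 = (\<Sum>i<m. (sqrt (G i i) * u i) * (sqrt (G i i) * v i))\<^sup>2"
    unfolding bform_eq_diag using diag_pos
    by (intro arg_cong[where f = power2] sum.cong) (auto simp: algebra_simps less_imp_le)
  also have "\<dots> \<le> (\<Sum>i<m. (sqrt (G i i) * u i)\<^sup>2) * (\<Sum>i<m. (sqrt (G i i) * v i)\<^sup>2)"
    by (rule Cauchy_Schwarz_ineq_sum)
  also have "\<dots> = bform m G u u * bform m G v v"
    unfolding bform_eq_diag using diag_pos
    by (intro arg_cong2[where f = times] sum.cong) (auto simp: power_mult_distrib less_imp_le power2_eq_square)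
  finally show ?thesis .
qed

lemma bform_mvec_bounded: "\<exists>K. \<forall>u. bform m G (mvec m A u) (mvec m A u) \<le> K * bform m G u u"
proof (intro exI allI)
  fix u
  define S where "S = bform m G u u"
  have entry: "(u j)\<^sup>2 \<le> S / G j j" if "j < m" for j
  proof -
    have "G j j * u j * u j \<le> (\<Sum>i<m. G i i * u i * u i)"
      using diag_pos that by (intro member_le_sum) (auto simp: mult.assoc less_imp_le)
    then show ?thesis
      using diag_pos[OF that] unfolding S_def bform_eq_diag by (simp add: field_simps power2_eq_square)
  qed
  have row: "(mvec m A u i)\<^sup>2 \<le> S * (real m * (\<Sum>j<m. (A i j)\<^sup>2 / G j j))" for i
  proof -
    have "(mvec m A u i)\<^sup>2 = (\<Sum>j<m. 1 * (A i j * u j))\<^sup>2"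
      unfolding mvec_def by simp
    also have "\<dots> \<le> (\<Sum>j<m. 1\<^sup>2) * (\<Sum>j<m. (A i j * u j)\<^sup>2)"
      by (rule Cauchy_Schwarz_ineq_sum)
    also have "\<dots> = real m * (\<Sum>j<m. (A i j)\<^sup>2 * (u j)\<^sup>2)"
      by (simp add: power_mult_distrib)
    also have "\<dots> \<le> real m * (\<Sum>j<m. (A i j)\<^sup>2 * (S / G j j))"
      using entry by (intro mult_left_mono sum_mono) auto
    also have "\<dots> = S * (real m * (\<Sum>j<m. (A i j)\<^sup>2 / G j j))"
      by (simp add: sum_distrib_left algebra_simps)
    finally show ?thesis .
  qed
  have "bform m G (mvec m A u) (mvec m A u) = (\<Sum>i<m. G i i * (mvec m A u i)\<^sup>2)"
    unfolding bform_eq_diag by (simp add: power2_eq_square mult.assoc)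
  also have "\<dots> \<le> (\<Sum>i<m. G i i * (S * (real m * (\<Sum>j<m. (A i j)\<^sup>2 / G j j))))"
    using row diag_pos by (intro sum_mono mult_left_mono) (auto simp: less_imp_le)
  also have "\<dots> = real m * (\<Sum>i<m. \<Sum>j<m. G i i * (A i j)\<^sup>2 / G j j) * bform m G u u"
    unfolding S_def by (simp add: sum_distrib_left sum_distrib_right algebra_simps)
  finally show "bform m G (mvec m A u) (mvec m A u)
      \<le> real m * (\<Sum>i<m. \<Sum>j<m. G i i * (A i j)\<^sup>2 / G j j) * bform m G u u" .
qed

lemma bdd_above_norm_ratios:
  "bdd_above {sqrt (bform m G (mvec m A u) (mvec m A u)) / sqrt (bform m G u u) | u. \<exists>i<m. u i \<noteq> 0}"
proof -
  obtain K where K: "\<And>u. bform m G (mvec m A u) (mvec m A u) \<le> K * bform m G u u"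
    using bform_mvec_bounded by blast
  show ?thesis
  proof (rule bdd_aboveI)
    fix x
    assume "x \<in> {sqrt (bform m G (mvec m A u) (mvec m A u)) / sqrt (bform m G u u) | u. \<exists>i<m. u i \<noteq> 0}"
    then obtain u i where x: "x = sqrt (bform m G (mvec m A u) (mvec m A u)) / sqrt (bform m G u u)"
      and i: "i < m" "u i \<noteq> 0"
      by auto
    have "sqrt (bform m G (mvec m A u) (mvec m A u)) \<le> sqrt K * sqrt (bform m G u u)"
      using K[of u] by (simp flip: real_sqrt_mult)
    then show "x \<le> sqrt K"
      unfolding x using bform_self_pos[of i u, OF i] by (simp add: divide_le_eq)
  qed
qed

lemma opnorm_G_nonneg:
  assumes "0 < m"
  shows "0 \<le> opnorm_G m G A"
proof -
  let ?one = "\<lambda>_. 1 :: real"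
  have "0 \<le> sqrt (bform m G (mvec m A ?one) (mvec m A ?one)) / sqrt (bform m G ?one ?one)"
    using bform_self_nonneg by simp
  also have "\<dots> \<le> opnorm_G m G A"
    unfolding opnorm_G_def using assms
    by (intro cSup_upper bdd_above_norm_ratios CollectI exI[of _ ?one]) auto
  finally show ?thesis .
qed

lemma bform_mvec_le_opnorm_G: "bform m G u (mvec m A u) \<le> opnorm_G m G A * bform m G u u"
proof (cases "\<exists>i<m. u i \<noteq> 0")
  case False
  then show ?thesis
    unfolding bform_eq_diag by simp
next
  case True
  then obtain i where i: "i < m" "u i \<noteq> 0" by auto
  define s where "s = sqrt (bform m G u u)"
  define r where "r = sqrt (bform m G (mvec m A u) (mvec m A u))"
  have s_pos: "s > 0"
    unfolding s_def using bform_self_pos[of i u, OF i] by simp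
  have "r / s \<le> opnorm_G m G A"
    unfolding opnorm_G_def r_def s_def using True by (intro cSup_upper bdd_above_norm_ratios) auto
  have "bform m G u (mvec m A u) \<le> sqrt ((bform m G u (mvec m A u))\<^sup>2)"
    by simp
  also have "\<dots> \<le> s * r"
    unfolding s_def r_def real_sqrt_mult[symmetric] by (intro real_sqrt_le_mono bform_Cauchy_Schwarz)
  also have "\<dots> \<le> s * s * opnorm_G m G A"
    using \<open>r / s \<le> opnorm_G m G A\<close> s_pos by (simp add: field_simps)
  also have "s * s = bform m G u u"
    unfolding s_def using bform_self_nonneg by simp
  finally show ?thesis
    by (simp add: mult.commute)
qed

lemma bform_inverse_diag_unit:
  assumes "k < m"
  shows "bform m G u (mvec m (diagm (\<lambda>i. 1 / G i i)) (unit_vec k)) = u k"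
proof -
  have "bform m G u (mvec m (diagm (\<lambda>i. 1 / G i i)) (unit_vec k)) = (\<Sum>i<m. if i = k then u k else 0)"
    unfolding bform_eq_diag unit_vec_def using diag_pos[OF assms] by (intro sum.cong) (auto simp: mvec_diagm)
  then show ?thesis
    using assms by simp
qed

lemma energy_has_real_derivative:
  assumes "\<And>i. i < m \<Longrightarrow> ((\<lambda>s. W s i) has_real_derivative W' i) (at t)"
  shows "((\<lambda>s. bform m G (W s) (W s)) has_real_derivative 2 * bform m G (W t) W') (at t)"
  using bform_has_real_derivative[of m W W' t G, OF assms] unfolding bform_commute[of W'] mult_2 .

end

lemma pos_diag_weight_kron_I2:
  "pos_diag_weight n G \<Longrightarrow> pos_diag_weight (2*n) (kron_I2 n G)"
  unfolding pos_diag_weight_def kron_I2_def blk_def by auto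

lemma reflection_form_nonneg:
  fixes x y r :: real
  assumes "\<bar>r\<bar> \<le> 1"
  shows "0 \<le> x\<^sup>2 + y\<^sup>2 - 2 * r * x * y"
proof -
  have "0 \<le> 1 - r\<^sup>2"
    using assms by (simp add: abs_square_le_1)
  then have "0 \<le> (x - r * y)\<^sup>2 + (1 - r\<^sup>2) * y\<^sup>2"
    by simp
  also have "\<dots> = x\<^sup>2 + y\<^sup>2 - 2 * r * x * y"
    by (simp add: power2_eq_square algebra_simps)
  finally show ?thesis .
qed

(* diag(-c, c) acting on the stacked vector (w1, w2): the paper's Lambda is pm_diag n cbar and
   its M_cbar is pm_diag n (D cbar). *)
definition pm_diag :: "nat \<Rightarrow> (nat \<Rightarrow> real) \<Rightarrow> nat \<Rightarrow> nat \<Rightarrow> real" where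
  "pm_diag n c = blk n (diagm (\<lambda>k. - c k)) (\<lambda>_ _. 0) (\<lambda>_ _. 0) (diagm c)"

definition split_advection ::
    "nat \<Rightarrow> (nat \<Rightarrow> nat \<Rightarrow> real) \<Rightarrow> (nat \<Rightarrow> real) \<Rightarrow> nat \<Rightarrow> nat \<Rightarrow> real" where
  "split_advection n D c =
     (\<lambda>p q. (mmul (2*n) (pm_diag n c) (kron_I2 n D) p q + mmul (2*n) (kron_I2 n D) (pm_diag n c) p q) / 2
            - pm_diag n (mvec n D c) p q / 2)"

lemma mvec_pm_diag:
  assumes "i < n"
  shows "mvec (2*n) (pm_diag n c) V i = - c i * V i"
    and "mvec (2*n) (pm_diag n c) V (n + i) = c i * V (n + i)"
  using assms unfolding pm_diag_def by (simp_all add: mvec_blk_upper mvec_blk_lower mvec_diagm)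

lemma mvec_kron_I2:
  assumes "i < n"
  shows "mvec (2*n) (kron_I2 n D) V i = mvec n D V i"
    and "mvec (2*n) (kron_I2 n D) V (n + i) = mvec n D (\<lambda>k. V (n + k)) i"
  using assms unfolding kron_I2_def by (simp_all add: mvec_blk_upper mvec_blk_lower)

locale sbp_operator = pos_diag_weight "N + 1" H for N :: nat and H :: "nat \<Rightarrow> nat \<Rightarrow> real" +
  fixes D :: "nat \<Rightarrow> nat \<Rightarrow> real"
  assumes sbp: "\<And>u v. bform (N + 1) (\<lambda>i j. mmul (N + 1) H D i j + mmul (N + 1) H D j i) u v
                        = u N * v N - u 0 * v 0"
begin

abbreviation n :: nat where "n \<equiv> N + 1"

sublocale H2: pos_diag_weight "2*n" "kron_I2 n H"
  by (rule pos_diag_weight_kron_I2) (rule pos_diag_weight_axioms)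

definition inv_H2_unit :: "nat \<Rightarrow> nat \<Rightarrow> real" where
  "inv_H2_unit k = mvec (2*n) (diagm (\<lambda>j. 1 / kron_I2 n H j j)) (unit_vec k)"

lemma sbp_bform: "bform n H u (mvec n D v) + bform n H (mvec n D u) v = u N * v N - u 0 * v 0"
proof -
  have "bform n H v (mvec n D u) = bform n H (mvec n D u) v"
    by (rule bform_commute)
  with sbp[of u v] show ?thesis
    unfolding bform_add_transpose bform_mmul by linarith
qed

(* Discrete counterpart of integrating w (c w_x) + w (c w)_x = (c w^2)_x over [0, L]. *)
lemma sbp_weighted:
  "bform n H w (\<lambda>i. c i * mvec n D w i) + bform n H w (mvec n D (\<lambda>i. c i * w i))
     = c N * (w N)\<^sup>2 - c 0 * (w 0)\<^sup>2"
proof -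
  have "bform n H w (\<lambda>i. c i * mvec n D w i) = bform n H (\<lambda>i. c i * w i) (mvec n D w)"
    by (rule bform_scale_swap)
  moreover have "bform n H w (mvec n D (\<lambda>i. c i * w i)) = bform n H (mvec n D (\<lambda>i. c i * w i)) w"
    by (rule bform_commute)
  ultimately show ?thesis
    using sbp_bform[of "\<lambda>i. c i * w i" w] by (simp add: power2_eq_square algebra_simps)
qed

lemma bform_split_advection:
  "bform (2*n) (kron_I2 n H) W (mvec (2*n) (split_advection n D c) W)
     = (c 0 * ((W 0)\<^sup>2 - (W n)\<^sup>2) - c N * ((W N)\<^sup>2 - (W (n + N))\<^sup>2)) / 2
       - bform (2*n) (kron_I2 n H) W (mvec (2*n) (pm_diag n (mvec n D c)) W) / 2"
proof -
  define w2 where "w2 = (\<lambda>i. W (n + i))"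
  let ?LD = "mvec (2*n) (pm_diag n c) (mvec (2*n) (kron_I2 n D) W)"
  let ?DL = "mvec (2*n) (kron_I2 n D) (mvec (2*n) (pm_diag n c) W)"
  have upper: "?LD i = - c i * mvec n D W i" "?DL i = mvec n D (\<lambda>j. - c j * W j) i"
    if "i < n" for i
  proof -
    show "?LD i = - c i * mvec n D W i"
      by (simp only: mvec_pm_diag[OF that] mvec_kron_I2[OF that])
    show "?DL i = mvec n D (\<lambda>j. - c j * W j) i"
      unfolding mvec_kron_I2[OF that] by (rule mvec_cong, rule mvec_pm_diag)
  qed
  have lower: "?LD (n + i) = c i * mvec n D w2 i" "?DL (n + i) = mvec n D (\<lambda>j. c j * w2 j) i"
    if "i < n" for i
  proof -
    show "?LD (n + i) = c i * mvec n D w2 i"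
      unfolding w2_def by (simp only: mvec_pm_diag[OF that] mvec_kron_I2[OF that])
    show "?DL (n + i) = mvec n D (\<lambda>j. c j * w2 j) i"
      unfolding mvec_kron_I2[OF that] w2_def by (rule mvec_cong, rule mvec_pm_diag)
  qed
  have "bform (2*n) (kron_I2 n H) W ?LD + bform (2*n) (kron_I2 n H) W ?DL
      = (bform n H W (\<lambda>i. - c i * mvec n D W i) + bform n H w2 (\<lambda>i. c i * mvec n D w2 i))
        + (bform n H W (mvec n D (\<lambda>j. - c j * W j)) + bform n H w2 (mvec n D (\<lambda>j. c j * w2 j)))"
    unfolding bform_kron_I2 w2_def[symmetric] using upper lower
    by (intro arg_cong2[where f = plus] bform_cong) auto
  also have "\<dots> = c 0 * ((W 0)\<^sup>2 - (w2 0)\<^sup>2) - c N * ((W N)\<^sup>2 - (w2 N)\<^sup>2)"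
    using sbp_weighted[of W "\<lambda>i. - c i"] sbp_weighted[of w2 c] by (simp add: algebra_simps)
  finally have "bform (2*n) (kron_I2 n H) W ?LD + bform (2*n) (kron_I2 n H) W ?DL
      = c 0 * ((W 0)\<^sup>2 - (W n)\<^sup>2) - c N * ((W N)\<^sup>2 - (W (n + N))\<^sup>2)"
    by (simp add: w2_def)
  then show ?thesis
    unfolding split_advection_def mvec_diff_matrix mvec_divide_matrix mvec_add_matrix mvec_mmul
      bform_diff_right bform_divide_right bform_add_right
    by (simp add: add_divide_distrib)
qed

lemma energy_rate:
  assumes dynamics: "\<And>i. i < 2*n \<Longrightarrow> V' i + mvec (2*n) (split_advection n D c) V i
      = mvec (2*n) B V i + - c 0 * (V n - R0 * V 0) * inv_H2_unit n i
        + - c N * (V N - RL * V (n + N)) * inv_H2_unit N i"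
  shows "bform (2*n) (kron_I2 n H) V V'
     = bform (2*n) (kron_I2 n H) V (mvec (2*n) B V)
       + bform (2*n) (kron_I2 n H) V (mvec (2*n) (pm_diag n (mvec n D c)) V) / 2
       - (c 0 * ((V 0)\<^sup>2 + (V n)\<^sup>2 - 2 * R0 * V 0 * V n)
          + c N * ((V N)\<^sup>2 + (V (n + N))\<^sup>2 - 2 * RL * V N * V (n + N))) / 2"
proof -
  have boundary_indices: "n < 2*n" "N < 2*n"
    by simp_all
  have "bform (2*n) (kron_I2 n H) V V' = bform (2*n) (kron_I2 n H) V
      (\<lambda>i. mvec (2*n) B V i - mvec (2*n) (split_advection n D c) V i
           + - c 0 * (V n - R0 * V 0) * inv_H2_unit n i + - c N * (V N - RL * V (n + N)) * inv_H2_unit N i)"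
    using dynamics by (intro bform_cong) (auto simp: algebra_simps)
  also have "\<dots> = bform (2*n) (kron_I2 n H) V (mvec (2*n) B V)
      - bform (2*n) (kron_I2 n H) V (mvec (2*n) (split_advection n D c) V)
      + - c 0 * (V n - R0 * V 0) * V n + - c N * (V N - RL * V (n + N)) * V N"
    unfolding bform_add_right bform_diff_right bform_scale_right inv_H2_unit_def
      H2.bform_inverse_diag_unit[OF boundary_indices(1)] H2.bform_inverse_diag_unit[OF boundary_indices(2)]
    ..
  finally show ?thesis
    unfolding bform_split_advection by (simp add: power2_eq_square field_simps)
qed

lemma energy_rate_le:
  assumes dynamics: "\<And>i. i < 2*n \<Longrightarrow> V' i + mvec (2*n) (split_advection n D c) V i
      = mvec (2*n) B V i + - c 0 * (V n - R0 * V 0) * inv_H2_unit n i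
        + - c N * (V N - RL * V (n + N)) * inv_H2_unit N i"
    and c_pos: "0 < c 0" "0 < c N" and R0: "\<bar>R0\<bar> \<le> 1" and RL: "\<bar>RL\<bar> \<le> 1"
  shows "2 * bform (2*n) (kron_I2 n H) V V'
     \<le> 2 * (opnorm_G (2*n) (kron_I2 n H) B + opnorm_G (2*n) (kron_I2 n H) (pm_diag n (mvec n D c)))
         * bform (2*n) (kron_I2 n H) V V"
proof -
  let ?H2 = "kron_I2 n H" and ?M = "pm_diag n (mvec n D c)"
  have boundary_dissipation:
    "0 \<le> c 0 * ((V 0)\<^sup>2 + (V n)\<^sup>2 - 2 * R0 * V 0 * V n)"
    "0 \<le> c N * ((V N)\<^sup>2 + (V (n + N))\<^sup>2 - 2 * RL * V N * V (n + N))"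
    using c_pos by (auto intro!: mult_nonneg_nonneg reflection_form_nonneg R0 RL)
  have "2 * bform (2*n) ?H2 V V' = 2 * bform (2*n) ?H2 V (mvec (2*n) B V) + bform (2*n) ?H2 V (mvec (2*n) ?M V)
      - (c 0 * ((V 0)\<^sup>2 + (V n)\<^sup>2 - 2 * R0 * V 0 * V n)
         + c N * ((V N)\<^sup>2 + (V (n + N))\<^sup>2 - 2 * RL * V N * V (n + N)))"
    by (simp only: energy_rate[OF dynamics]) (simp add: field_simps)
  also have "\<dots> \<le> 2 * bform (2*n) ?H2 V (mvec (2*n) B V) + bform (2*n) ?H2 V (mvec (2*n) ?M V)"
    using boundary_dissipation by linarith
  also have "\<dots> \<le> 2 * (opnorm_G (2*n) ?H2 B * bform (2*n) ?H2 V V)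
                    + opnorm_G (2*n) ?H2 ?M * bform (2*n) ?H2 V V"
    using H2.bform_mvec_le_opnorm_G by (intro add_mono mult_left_mono) auto
  also have "\<dots> \<le> 2 * (opnorm_G (2*n) ?H2 B + opnorm_G (2*n) ?H2 ?M) * bform (2*n) ?H2 V V"
    using H2.opnorm_G_nonneg[of ?M] H2.bform_self_nonneg[of V] by (simp add: algebra_simps)
  finally show ?thesis .
qed

end

theorem mainTheorem3:
  fixes L :: real and N :: nat and x :: "nat \<Rightarrow> real"
    and D H Q :: "nat \<Rightarrow> nat \<Rightarrow> real"
    and cbar a b c d :: "nat \<Rightarrow> real"
    and R0 RL :: real
    and I :: "real set"
    and W W' :: "real \<Rightarrow> nat \<Rightarrow> real"
    and Eh :: "real \<Rightarrow> real"
  assumes L_pos: "L > 0" and N_ge: "N \<ge> 1"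
    and grid: "\<And>i. i \<le> N \<Longrightarrow> x i = real i * L / real N"
    and H_diag: "\<And>i j. i \<le> N \<Longrightarrow> j \<le> N \<Longrightarrow> i \<noteq> j \<Longrightarrow> H i j = 0"
    and H_pos: "\<And>i. i \<le> N \<Longrightarrow> H i i > 0"
    and Q_def: "Q = mmul (N+1) H D"
    and SBP: "\<And>u v. bform (N+1) (\<lambda>i j. Q i j + Q j i) u v = u N * v N - u 0 * v 0"
    and cbar_pos: "\<And>i. i \<le> N \<Longrightarrow> cbar i > 0"
    and R0: "\<bar>R0\<bar> \<le> 1" and RL: "\<bar>RL\<bar> \<le> 1"
    and I_open: "open I"
    and W_deriv: "\<And>t i. t \<in> I \<Longrightarrow> i < 2*(N+1) \<Longrightarrow>
                     ((\<lambda>s. W s i) has_real_derivative W' t i) (at t)"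
    and W_eq: "\<And>t i. t \<in> I \<Longrightarrow> i < 2*(N+1) \<Longrightarrow>
      (let n = N+1; n2 = 2*(N+1);
           Lam = blk n (diagm (\<lambda>k. - cbar k)) (\<lambda>_ _. 0) (\<lambda>_ _. 0) (diagm cbar);
           D2 = kron_I2 n D; H2 = kron_I2 n H;
           Dc = mvec n D cbar;
           Mc = blk n (diagm (\<lambda>k. - Dc k)) (\<lambda>_ _. 0) (\<lambda>_ _. 0) (diagm Dc);
           Bt = blk n (diagm a) (diagm b) (diagm c) (diagm d);
           LamD = (\<lambda>p q. (mmul n2 Lam D2 p q + mmul n2 D2 Lam p q) / 2 - Mc p q / 2);
           H2inv = diagm (\<lambda>k. 1 / H2 k k);
           alpha0 = - cbar 0; alphaL = - cbar N;
           e = (\<lambda>k::nat. \<lambda>p::nat. if p = k then (1::real) else 0)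
       in W' t i + mvec n2 LamD (W t) i
          = mvec n2 Bt (W t) i
            + alpha0 * (W t (n + 0) - R0 * W t 0) * mvec n2 H2inv (e (n + 0)) i
            + alphaL * (W t N - RL * W t (n + N)) * mvec n2 H2inv (e N) i)"
    and Eh_def: "\<And>t. Eh t = bform (2*(N+1)) (kron_I2 (N+1) H) (W t) (W t)"
  shows "\<forall>t\<in>I. \<forall>E'. (Eh has_real_derivative E') (at t) \<longrightarrow>
           E' \<le> 2 * (opnorm_G (2*(N+1)) (kron_I2 (N+1) H)
                        (blk (N+1) (diagm a) (diagm b) (diagm c) (diagm d))
                     + opnorm_G (2*(N+1)) (kron_I2 (N+1) H)
                        (blk (N+1) (diagm (\<lambda>k. - mvec (N+1) D cbar k)) (\<lambda>_ _. 0) (\<lambda>_ _. 0)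
                                   (diagm (mvec (N+1) D cbar)))) * Eh t"
  unfolding pm_diag_def[symmetric]
proof (intro ballI allI impI)
  fix t E'
  assume t: "t \<in> I" and E': "(Eh has_real_derivative E') (at t)"
  interpret sbp_operator N H D
    using H_diag H_pos SBP unfolding Q_def by unfold_locales auto
  have Eh_eq: "Eh = (\<lambda>s. bform (2*n) (kron_I2 n H) (W s) (W s))"
    by (intro ext Eh_def)
  have dynamics: "\<And>i. i < 2*n \<Longrightarrow> W' t i + mvec (2*n) (split_advection n D cbar) (W t) i
      = mvec (2*n) (blk n (diagm a) (diagm b) (diagm c) (diagm d)) (W t) i
        + - cbar 0 * (W t n - R0 * W t 0) * inv_H2_unit n i
        + - cbar N * (W t N - RL * W t (n + N)) * inv_H2_unit N i"
    using W_eq[OF t] unfolding Let_def add_0_right pm_diag_def[symmetric] split_advection_def[symmetric]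
      unit_vec_def[symmetric] inv_H2_unit_def[symmetric] .
  have "(Eh has_real_derivative 2 * bform (2*n) (kron_I2 n H) (W t) (W' t)) (at t)"
    unfolding Eh_eq using W_deriv[OF t] by (rule H2.energy_has_real_derivative)
  with E' have "E' = 2 * bform (2*n) (kron_I2 n H) (W t) (W' t)"
    by (rule DERIV_unique)
  also have "\<dots> \<le> 2 * (opnorm_G (2*n) (kron_I2 n H) (blk n (diagm a) (diagm b) (diagm c) (diagm d))
                        + opnorm_G (2*n) (kron_I2 n H) (pm_diag n (mvec n D cbar))) * Eh t"
    unfolding Eh_def by (rule energy_rate_le[OF dynamics]) (use cbar_pos R0 RL in auto)
  finally show "E' \<le> 2 * (opnorm_G (2*n) (kron_I2 n H) (blk n (diagm a) (diagm b) (diagm c) (diagm d))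
                        + opnorm_G (2*n) (kron_I2 n H) (pm_diag n (mvec n D cbar))) * Eh t" .
qed

end
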